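(* Let $d=2n$ be even, $\omega=e^{2\pi i/d}$, and $F_d=(\omega^{jk})_{j,k=0}^{d-1}$ the Fourier matrix. For $\vec\xi=(\xi_1,\dots,\xi_{n-1})\in\mathbb{R}^{n-1}$ define the real $d\times d$ matrix $R(\vec\xi)$ by $R(\vec\xi)_{j,k}=0$ if $j$ is even, $R(\vec\xi)_{j,k}=0$ if $j$ is odd and $k\equiv0\pmod n$, and $R(\vec\xi)_{j,k}=\xi_{(k \bmod n)}$ otherwise (where $k\bmod n\in\{1,\dots,n-1\}$). Then for every $\vec\xi$ both $F_d\circ\exp(iR(\vec\xi))$ and $F_d\circ\exp(iR(\vec\xi)^t)$ are complex Hadamard matrices.
   Context: A $d\times d$ complex Hadamard matrix has unimodular entries and pairwise orthogonal columns. $\circ$ denotes the entrywise product and $\exp(iR)$ the entrywise exponential $(\exp(iR))_{jk}=e^{iR_{jk}}$; rows and columns are indexed $0,\dots,d-1$. *)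

theory Defs
  imports Complex_Main
begin

text \<open>A d x d complex matrix is represented as a function nat => nat => complex,
  only entries with indices in {0..<d} being relevant.\<close>

definition complex_hadamard :: "nat \<Rightarrow> (nat \<Rightarrow> nat \<Rightarrow> complex) \<Rightarrow> bool" where
  "complex_hadamard d H \<longleftrightarrow>
     (\<forall>j<d. \<forall>k<d. cmod (H j k) = 1) \<and>
     (\<forall>k<d. \<forall>l<d. k \<noteq> l \<longrightarrow> (\<Sum>j<d. H j k * cnj (H j l)) = 0)"

definition fourier :: "nat \<Rightarrow> nat \<Rightarrow> nat \<Rightarrow> complex" where
  "fourier d j k = exp (2 * of_real pi * \<i> / of_nat d) ^ (j * k)"

definition had_prod :: "(nat \<Rightarrow> nat \<Rightarrow> complex) \<Rightarrow> (nat \<Rightarrow> nat \<Rightarrow> complex) \<Rightarrow> nat \<Rightarrow> nat \<Rightarrow> complex" where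
  "had_prod A B j k = A j k * B j k"

definition exp_i :: "(nat \<Rightarrow> nat \<Rightarrow> real) \<Rightarrow> nat \<Rightarrow> nat \<Rightarrow> complex" where
  "exp_i R j k = exp (\<i> * of_real (R j k))"

definition mat_transpose :: "(nat \<Rightarrow> nat \<Rightarrow> 'a) \<Rightarrow> nat \<Rightarrow> nat \<Rightarrow> 'a" where
  "mat_transpose R j k = R k j"

text \<open>The real d x d matrix R(xi), d = 2n; xi is indexed by 1..n-1 (other values unused).\<close>
definition Rxi :: "nat \<Rightarrow> (nat \<Rightarrow> real) \<Rightarrow> nat \<Rightarrow> nat \<Rightarrow> real" where
  "Rxi n \<xi> j k = (if even j then 0 else if k mod n = 0 then 0 else \<xi> (k mod n))"

end

theory Submission
  imports Defs
begin

text \<open>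
  The inner product of columns \<open>k \<noteq> l\<close> of \<open>F \<circ> exp(iR)\<close> is
  \<open>\<Sum>j. u^j exp(i(R j k - R j l))\<close> with \<open>u = \<omega>^(k - l) \<noteq> 1\<close>, and both matrices of the theorem
  have the shape \<open>R j k = [j odd] a(k)\<close> resp. \<open>R j k = [k odd] a(j)\<close> for an \<open>n\<close>-periodic \<open>a\<close>.
  In the first case the phase depends only on the parity of \<open>j\<close>, so the sum factors as
  \<open>(1 + u exp(i\<theta>)) \<Sum>i<n. (u^2)^i\<close>. The geometric sum vanishes unless \<open>u^2 = 1\<close>, i.e. \<open>|k - l| = n\<close>;
  then \<open>u = -1\<close> and \<open>\<theta> = a(k) - a(l) = 0\<close>, so the first factor vanishes. In the second case the
  phase vanishes if \<open>k, l\<close> have equal parity, leaving a plain geometric sum; otherwise \<open>k - l\<close>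
  is odd, so \<open>u^n = -1\<close> and the halves \<open>j < n\<close> and \<open>j \<ge> n\<close> of the sum cancel.
\<close>

definition unity_root :: "nat \<Rightarrow> complex" where
  "unity_root d = cis (2 * pi / real d)"

lemma fourier_eq_unity_root_power: "fourier d j k = unity_root d ^ (j * k)"
  by (simp add: fourier_def unity_root_def cis_conv_exp mult_ac)

lemma unity_root_power: "unity_root d ^ t = cis (2 * pi * real t / real d)"
  by (simp add: unity_root_def DeMoivre mult_ac)

lemma unity_root_power_self [simp]: "unity_root d ^ d = 1"
  by (cases "d = 0") (simp_all add: unity_root_power)

lemma unity_root_power_eq_1_iff:
  assumes "d > 0"
  shows "unity_root d ^ t = 1 \<longleftrightarrow> d dvd t"
proof
  assume "unity_root d ^ t = 1"
  then have "cos (2 * pi * real t / real d) = 1"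
    by (simp add: unity_root_power complex_eq_iff)
  then obtain m :: int where "2 * pi * real t / real d = real_of_int m * 2 * pi"
    by (auto simp: cos_one_2pi_int)
  then have "real t = real_of_int m * real d"
    using assms by (simp add: field_simps)
  then have "int t = m * int d"
    by (metis of_int_eq_iff of_int_mult of_int_of_nat_eq)
  then show "d dvd t"
    by (metis dvd_triv_right of_nat_dvd_iff)
next
  assume "d dvd t"
  then obtain q where "t = d * q" ..
  then show "unity_root d ^ t = 1"
    by (simp add: power_mult)
qed

lemma unity_root_double_power_half: "n > 0 \<Longrightarrow> unity_root (2 * n) ^ n = -1"
  by (simp add: unity_root_power)

lemma cnj_unity_root_power: "l \<le> d \<Longrightarrow> cnj (unity_root d) ^ l = unity_root d ^ (d - l)"
proof -
  assume "l \<le> d"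
  have nz: "unity_root d ^ l \<noteq> 0" by (simp add: unity_root_def)
  have "cnj (unity_root d) = inverse (unity_root d)"
    by (simp add: unity_root_def cis_cnj)
  then have "cnj (unity_root d) ^ l * unity_root d ^ l = 1"
    using nz by (simp add: power_inverse)
  moreover have "unity_root d ^ (d - l) * unity_root d ^ l = 1"
    using \<open>l \<le> d\<close> by (simp flip: power_add)
  ultimately show ?thesis using nz by (metis mult_right_cancel)
qed

lemma unity_root_power_diff_ne_1:
  assumes "k < d" "l < d" "k \<noteq> l"
  shows "unity_root d ^ (k + (d - l)) \<noteq> 1"
proof
  assume "unity_root d ^ (k + (d - l)) = 1"
  then have "d dvd k + (d - l)" using assms by (simp add: unity_root_power_eq_1_iff)
  then obtain q where q: "k + (d - l) = d * q" ..
  have "d * 0 < d * q" "d * q < d * 2" "d * q \<noteq> d * 1" using assms by (auto simp flip: q)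
  then show False by (simp only: mult_less_cancel1 mult_cancel1) linarith
qed

lemma unity_root_power_diff_square_eq_1:
  assumes "k < 2 * n" "l < 2 * n" "k \<noteq> l"
    and "(unity_root (2 * n) ^ (k + (2 * n - l)))\<^sup>2 = 1"
  shows "k = l + n \<or> l = k + n"
proof -
  have "unity_root (2 * n) ^ (2 * (k + (2 * n - l))) = 1"
    using assms(4) by (simp only: mult.commute[of 2] power_mult)
  then have "2 * n dvd 2 * (k + (2 * n - l))"
    using assms(1) by (subst (asm) unity_root_power_eq_1_iff) simp_all
  then have "n dvd k + (2 * n - l)"
    by (simp only: nat_mult_dvd_cancel_disj) simp
  then obtain q where q: "k + (2 * n - l) = n * q" ..
  have "n * q < n * 4" "n * q \<noteq> n * 0" "n * q \<noteq> n * 2"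
    using assms(1-3) by (auto simp flip: q)
  then have "q = 1 \<or> q = 3" by (simp only: mult_less_cancel1 mult_cancel1) arith
  then show ?thesis using q assms(1,2) by auto
qed

lemma had_prod_fourier_exp_i_mult_cnj:
  assumes "l \<le> d"
  shows "had_prod (fourier d) (exp_i R) j k * cnj (had_prod (fourier d) (exp_i R) j l)
       = (unity_root d ^ (k + (d - l))) ^ j * cis (R j k - R j l)"
proof -
  have "fourier d j k * cnj (fourier d j l) = (unity_root d ^ k * unity_root d ^ (d - l)) ^ j"
    using assms by (simp add: fourier_eq_unity_root_power mult.commute[of j] power_mult
        cnj_unity_root_power power_mult_distrib)
  moreover have "exp_i R j k * cnj (exp_i R j l) = cis (R j k - R j l)"
    by (simp add: exp_i_def cis_conv_exp[symmetric] cis_cnj cis_mult)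
  ultimately show ?thesis
    by (simp add: had_prod_def power_add mult_ac)
qed

lemma complex_hadamard_fourier_exp_i_iff:
  "complex_hadamard d (had_prod (fourier d) (exp_i R)) \<longleftrightarrow>
     (\<forall>k<d. \<forall>l<d. k \<noteq> l \<longrightarrow> (\<Sum>j<d. (unity_root d ^ (k + (d - l))) ^ j * cis (R j k - R j l)) = 0)"
proof -
  have "cmod (had_prod (fourier d) (exp_i R) j k) = 1" for j k
    by (simp add: had_prod_def exp_i_def fourier_eq_unity_root_power norm_mult norm_power
        unity_root_def flip: cis_conv_exp)
  moreover have "(\<Sum>j<d. had_prod (fourier d) (exp_i R) j k * cnj (had_prod (fourier d) (exp_i R) j l))
      = (\<Sum>j<d. (unity_root d ^ (k + (d - l))) ^ j * cis (R j k - R j l))" if "l < d" for k l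
    using that by (simp only: had_prod_fourier_exp_i_mult_cnj less_imp_le)
  ultimately show ?thesis
    unfolding complex_hadamard_def by simp
qed

lemma sum_powers_root_of_unity_eq_0:
  fixes z :: "'a :: field"
  assumes "z ^ m = 1" "z \<noteq> 1"
  shows "(\<Sum>j<m. z ^ j) = 0"
  using assms by (simp add: geometric_sum)

lemma sum_lessThan_double: "(\<Sum>i<2 * (n::nat). f i) = (\<Sum>i<n. f (2 * i) + f (2 * i + 1))"
  by (induction n) (simp_all add: ac_simps)

lemma sum_lessThan_add: "(\<Sum>i<m + (p::nat). f i) = (\<Sum>i<m. f i) + (\<Sum>i<p. f (m + i))"
  by (induction p) (simp_all add: ac_simps)

lemma complex_hadamard_fourier_exp_i_odd_rows:
  fixes a :: "nat \<Rightarrow> real"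
  assumes periodic: "\<And>k. a (k + n) = a k"
  shows "complex_hadamard (2 * n) (had_prod (fourier (2 * n)) (exp_i (\<lambda>j k. if even j then 0 else a k)))"
  unfolding complex_hadamard_fourier_exp_i_iff
proof (intro allI impI)
  fix k l assume k: "k < 2 * n" and l: "l < 2 * n" and "k \<noteq> l"
  define u where "u = unity_root (2 * n) ^ (k + (2 * n - l))"
  define e where "e = cis (a k - a l)"
  have "(\<Sum>j<2 * n. u ^ j * cis ((if even j then 0 else a k) - (if even j then 0 else a l)))
      = (\<Sum>i<n. u ^ (2 * i) + u ^ (2 * i + 1) * e)"
    by (simp add: sum_lessThan_double e_def)
  also have "\<dots> = (1 + u * e) * (\<Sum>i<n. (u\<^sup>2) ^ i)"
    by (simp add: sum_distrib_left algebra_simps flip: power_mult)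
  also have "\<dots> = 0"
  proof (cases "u\<^sup>2 = 1")
    case True
    have "u \<noteq> 1" unfolding u_def using k l \<open>k \<noteq> l\<close> by (rule unity_root_power_diff_ne_1)
    with True have "u = -1" by (simp add: power2_eq_1_iff)
    from k l \<open>k \<noteq> l\<close> True have "k = l + n \<or> l = k + n"
      unfolding u_def by (rule unity_root_power_diff_square_eq_1)
    then have "a k = a l" using periodic by auto
    then have "e = 1" by (simp add: e_def)
    with \<open>u = -1\<close> show ?thesis by simp
  next
    case False
    have "(u\<^sup>2) ^ n = 1"
      unfolding u_def by (metis power_mult mult.commute unity_root_power_self power_one)
    with False show ?thesis by (simp add: sum_powers_root_of_unity_eq_0)
  qed
  finally show "(\<Sum>j<2 * n. (unity_root (2 * n) ^ (k + (2 * n - l))) ^ j *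
      cis ((if even j then 0 else a k) - (if even j then 0 else a l))) = 0"
    by (simp only: u_def)
qed

lemma complex_hadamard_fourier_exp_i_odd_columns:
  fixes a :: "nat \<Rightarrow> real"
  assumes periodic: "\<And>j. a (j + n) = a j"
  shows "complex_hadamard (2 * n) (had_prod (fourier (2 * n)) (exp_i (\<lambda>j k. if even k then 0 else a j)))"
  unfolding complex_hadamard_fourier_exp_i_iff
proof (intro allI impI)
  fix k l assume k: "k < 2 * n" and l: "l < 2 * n" and "k \<noteq> l"
  then have n: "n > 0" by simp
  define u where "u = unity_root (2 * n) ^ (k + (2 * n - l))"
  define g where "g j = u ^ j * cis ((if even k then 0 else a j) - (if even l then 0 else a j))" for j
  have "u \<noteq> 1" unfolding u_def using k l \<open>k \<noteq> l\<close> by (rule unity_root_power_diff_ne_1)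
  have "(\<Sum>j<2 * n. g j) = 0"
  proof (cases "even k = even l")
    case True
    have "u ^ (2 * n) = 1"
      unfolding u_def by (metis power_mult mult.commute unity_root_power_self power_one)
    with True \<open>u \<noteq> 1\<close> show ?thesis by (simp add: g_def sum_powers_root_of_unity_eq_0)
  next
    case False
    then have "odd (k + (2 * n - l))" using l by auto
    have "u ^ n = (unity_root (2 * n) ^ n) ^ (k + (2 * n - l))"
      unfolding u_def by (metis power_mult mult.commute)
    also have "\<dots> = -1"
      using n \<open>odd (k + (2 * n - l))\<close> by (simp add: unity_root_double_power_half)
    finally have "u ^ n = -1" .
    then have "g (n + j) = - g j" for j
      using periodic by (simp add: g_def power_add add.commute[of n])
    then show ?thesis by (simp add: mult_2 sum_lessThan_add sum_negf)
  qed
  then show "(\<Sum>j<2 * n. (unity_root (2 * n) ^ (k + (2 * n - l))) ^ j *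
      cis ((if even k then 0 else a j) - (if even l then 0 else a j))) = 0"
    by (simp only: g_def u_def)
qed

theorem mainTheorem10:
  fixes n :: nat and \<xi> :: "nat \<Rightarrow> real"
  shows "complex_hadamard (2 * n) (had_prod (fourier (2 * n)) (exp_i (Rxi n \<xi>)))
       \<and> complex_hadamard (2 * n) (had_prod (fourier (2 * n)) (exp_i (mat_transpose (Rxi n \<xi>))))"
proof -
  define a where "a k = (if k mod n = 0 then 0 else \<xi> (k mod n))" for k
  have periodic: "a (k + n) = a k" for k
    by (simp add: a_def)
  have rows: "Rxi n \<xi> = (\<lambda>j k. if even j then 0 else a k)"
    by (simp add: fun_eq_iff Rxi_def a_def)
  have columns: "mat_transpose (Rxi n \<xi>) = (\<lambda>j k. if even k then 0 else a j)"
    by (simp add: fun_eq_iff mat_transpose_def Rxi_def a_def)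
  show ?thesis
    unfolding columns unfolding rows
    using complex_hadamard_fourier_exp_i_odd_rows[of a n, OF periodic]
      complex_hadamard_fourier_exp_i_odd_columns[of a n, OF periodic]
    by (rule conjI)
qed

end
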